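(* Let $p$ be a graph and $V_c(p)$ a vertex cover of $p$ such that the induced subgraph $p[V_c(p)]$ has at least two connected components. Let $Q$ be a set of join units of $p$ with respect to $V_c(p)$ whose union is $p$, and let $T$ be any join tree for $p$ over $Q$. Then $T$ has an internal node whose two children are labeled by subgraphs $p_1,p_2$ with $V(p_1)\cap V(p_2)\cap V_c(p)=\emptyset$.
   Context: Graphs are finite, simple and undirected. A vertex cover of $p$ is a set $V_c(p)\subseteq V(p)$ containing an endpoint of every edge of $p$; for $X\subseteq V(g)$, $g[X]$ denotes the subgraph of $g$ induced on $X$. A join unit of $p$ with respect to $V_c(p)$ is a subgraph $q$ of $p$ together with a designated anchor vertex $a_q\in V(q)\cap V_c(p)$ that is adjacent in $q$ to every other vertex of $q$ (an R1 unit). The union of subgraphs has as vertex set and edge set the unions of their vertex sets and edge sets. A join tree for $p$ over $Q$ is a rooted tree in which every internal node has exactly two children, each node is labeled by a subgraph of $p$, the leaves are labeled by elements of $Q$, each internal node is labeled by the union of its children's labels, and the root is labeled by $p$ (it models performing the joins pairwise in some order). *)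

theory Defs
  imports Main
begin

type_synonym 'a graph = "'a set \<times> 'a set set"

definition verts :: "'a graph \<Rightarrow> 'a set" where "verts G = fst G"
definition edges :: "'a graph \<Rightarrow> 'a set set" where "edges G = snd G"

definition is_graph :: "'a graph \<Rightarrow> bool" where
  "is_graph G \<longleftrightarrow> finite (verts G) \<and>
     (\<forall>e\<in>edges G. \<exists>u v. e = {u, v} \<and> u \<noteq> v \<and> u \<in> verts G \<and> v \<in> verts G)"

definition adj :: "'a graph \<Rightarrow> 'a \<Rightarrow> 'a \<Rightarrow> bool" where
  "adj G u v \<longleftrightarrow> {u, v} \<in> edges G"

definition subgraph :: "'a graph \<Rightarrow> 'a graph \<Rightarrow> bool" where
  "subgraph q p \<longleftrightarrow> is_graph q \<and> verts q \<subseteq> verts p \<and> edges q \<subseteq> edges p"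

definition vertex_cover :: "'a graph \<Rightarrow> 'a set \<Rightarrow> bool" where
  "vertex_cover p C \<longleftrightarrow> C \<subseteq> verts p \<and> (\<forall>e\<in>edges p. e \<inter> C \<noteq> {})"

definition induced :: "'a graph \<Rightarrow> 'a set \<Rightarrow> 'a graph" where
  "induced g X = (verts g \<inter> X, {e \<in> edges g. e \<subseteq> X})"

definition connected_components :: "'a graph \<Rightarrow> 'a set set" where
  "connected_components G =
     verts G // {(u, v). u \<in> verts G \<and> v \<in> verts G \<and> (adj G)\<^sup>*\<^sup>* u v}"

definition graph_union :: "'a graph \<Rightarrow> 'a graph \<Rightarrow> 'a graph" where
  "graph_union G H = (verts G \<union> verts H, edges G \<union> edges H)"

definition Union_graphs :: "'a graph set \<Rightarrow> 'a graph" where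
  "Union_graphs Q = (\<Union>(verts ` Q), \<Union>(edges ` Q))"

definition join_unit_with_anchor :: "'a graph \<Rightarrow> 'a set \<Rightarrow> 'a graph \<Rightarrow> 'a \<Rightarrow> bool" where
  "join_unit_with_anchor p C q a \<longleftrightarrow> subgraph q p \<and> a \<in> verts q \<and> a \<in> C \<and>
     (\<forall>v\<in>verts q. v \<noteq> a \<longrightarrow> adj q a v)"

definition join_unit :: "'a graph \<Rightarrow> 'a set \<Rightarrow> 'a graph \<Rightarrow> bool" where
  "join_unit p C q \<longleftrightarrow> (\<exists>a. join_unit_with_anchor p C q a)"

datatype 'g jtree = Leaf 'g | Node 'g "'g jtree" "'g jtree"

fun lbl :: "'g jtree \<Rightarrow> 'g" where
  "lbl (Leaf g) = g"
| "lbl (Node g l r) = g"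

fun subtrees :: "'g jtree \<Rightarrow> 'g jtree set" where
  "subtrees (Leaf g) = {Leaf g}"
| "subtrees (Node g l r) = insert (Node g l r) (subtrees l \<union> subtrees r)"

fun jtree_ok :: "'a graph \<Rightarrow> 'a graph set \<Rightarrow> 'a graph jtree \<Rightarrow> bool" where
  "jtree_ok p Q (Leaf g) \<longleftrightarrow> g \<in> Q \<and> subgraph g p"
| "jtree_ok p Q (Node g l r) \<longleftrightarrow> subgraph g p \<and> g = graph_union (lbl l) (lbl r) \<and>
     jtree_ok p Q l \<and> jtree_ok p Q r"

definition join_tree :: "'a graph \<Rightarrow> 'a graph set \<Rightarrow> 'a graph jtree \<Rightarrow> bool" where
  "join_tree p Q T \<longleftrightarrow> jtree_ok p Q T \<and> lbl T = p"

end

theory Submission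
  imports Defs
begin

text \<open>If every internal node of T joined two labels sharing a cover vertex, then by induction on T
  the cover vertices of every label would be mutually reachable in p[C]: a join unit is a star
  around its anchor, and two mutually reachable sets with a common vertex have a mutually reachable
  union. At the root this makes all of C one component, contradicting the two components.\<close>

definition mutually_reachable :: "'a graph \<Rightarrow> 'a set \<Rightarrow> bool" where
  "mutually_reachable G X \<longleftrightarrow> (\<forall>u\<in>X. \<forall>v\<in>X. (adj G)\<^sup>*\<^sup>* u v)"

lemma adj_sym: "adj G u v \<Longrightarrow> adj G v u"
  unfolding adj_def by (simp add: insert_commute)

lemma rtranclp_adj_sym: "(adj G)\<^sup>*\<^sup>* u v \<Longrightarrow> (adj G)\<^sup>*\<^sup>* v u"
  by (induction rule: rtranclp_induct)
     (auto intro: converse_rtranclp_into_rtranclp adj_sym)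

lemma adj_induced_iff: "adj (induced G X) u v \<longleftrightarrow> adj G u v \<and> u \<in> X \<and> v \<in> X"
  unfolding adj_def induced_def edges_def by auto

lemma mutually_reachable_if_reachable_from:
  assumes "a \<in> X" and "\<forall>v\<in>X. (adj G)\<^sup>*\<^sup>* a v"
  shows "mutually_reachable G X"
  unfolding mutually_reachable_def
  using assms by (meson rtranclp_adj_sym rtranclp_trans)

lemma mutually_reachable_Un:
  assumes "mutually_reachable G A" and "mutually_reachable G B" and "A \<inter> B \<noteq> {}"
  shows "mutually_reachable G (A \<union> B)"
proof -
  obtain c where "c \<in> A" "c \<in> B" using assms(3) by blast
  then have "\<forall>v\<in>A \<union> B. (adj G)\<^sup>*\<^sup>* c v"
    using assms(1,2) unfolding mutually_reachable_def by blast
  then show ?thesis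
    using \<open>c \<in> A\<close> by (intro mutually_reachable_if_reachable_from) auto
qed

lemma card_connected_components_le_1:
  assumes "mutually_reachable G (verts G)"
  shows "card (connected_components G) \<le> 1"
proof -
  have "connected_components G \<subseteq> {verts G}"
    using assms unfolding connected_components_def quotient_def mutually_reachable_def by auto
  then show ?thesis
    using card_mono[of "{verts G}"] by fastforce
qed

lemma join_unit_cover_vertices_reachable:
  assumes "join_unit p C q"
  shows "mutually_reachable (induced p C) (verts q \<inter> C)"
proof -
  obtain a where a: "join_unit_with_anchor p C q a"
    using assms unfolding join_unit_def by blast
  have "adj (induced p C) a v" if "v \<in> verts q \<inter> C" "v \<noteq> a" for v
    using a that unfolding join_unit_with_anchor_def subgraph_def adj_induced_iff
    by (auto simp: adj_def)
  then have "\<forall>v\<in>verts q \<inter> C. (adj (induced p C))\<^sup>*\<^sup>* a v"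
    by blast
  moreover have "a \<in> verts q \<inter> C"
    using a unfolding join_unit_with_anchor_def by blast
  ultimately show ?thesis
    by (rule mutually_reachable_if_reachable_from[rotated])
qed

lemma jtree_cover_vertices_reachable:
  assumes "\<forall>q\<in>Q. join_unit p C q"
  shows "jtree_ok p Q t \<Longrightarrow>
    \<forall>g l r. Node g l r \<in> subtrees t \<longrightarrow> verts (lbl l) \<inter> verts (lbl r) \<inter> C \<noteq> {} \<Longrightarrow>
    mutually_reachable (induced p C) (verts (lbl t) \<inter> C)"
proof (induction t)
  case (Leaf q)
  then show ?case
    using assms by (simp add: join_unit_cover_vertices_reachable)
next
  case (Node g l r)
  have "Node g l r \<in> subtrees (Node g l r)"
    by simp
  then have "verts (lbl l) \<inter> C \<inter> (verts (lbl r) \<inter> C) \<noteq> {}"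
    using Node.prems(2) by blast
  with Node have "mutually_reachable (induced p C) (verts (lbl l) \<inter> C \<union> verts (lbl r) \<inter> C)"
    by (intro mutually_reachable_Un) auto
  moreover have "verts g = verts (lbl l) \<union> verts (lbl r)"
    using Node.prems(1) by (simp add: graph_union_def verts_def)
  ultimately show ?case
    by (simp add: Int_Un_distrib2)
qed

theorem mainTheorem6:
  fixes p :: "'a graph" and C :: "'a set" and Q :: "'a graph set" and T :: "'a graph jtree"
  assumes "is_graph p"
    and "vertex_cover p C"
    and "card (connected_components (induced p C)) \<ge> 2"
    and "\<forall>q\<in>Q. join_unit p C q"
    and "Union_graphs Q = p"
    and "join_tree p Q T"
  shows "\<exists>g l r. Node g l r \<in> subtrees T \<and> verts (lbl l) \<inter> verts (lbl r) \<inter> C = {}"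
proof (rule ccontr)
  assume "\<not> ?thesis"
  moreover have "jtree_ok p Q T" and "lbl T = p"
    using assms(6) unfolding join_tree_def by auto
  ultimately have "mutually_reachable (induced p C) (verts p \<inter> C)"
    using jtree_cover_vertices_reachable[OF assms(4)] by fastforce
  moreover have "verts (induced p C) = verts p \<inter> C"
    by (simp add: induced_def verts_def)
  ultimately have "card (connected_components (induced p C)) \<le> 1"
    by (metis card_connected_components_le_1)
  then show False
    using assms(3) by simp
qed

end
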